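(* Let $R$ be a commutative ring with $\mathbb{Q}\subseteq R$. Let $\mathcal{E}$ (resp. $\mathcal{F}$) be a finitely generated projective module over a commutative unital $R$-algebra $\mathcal{A}$ (resp. $\mathcal{B}$), with a symmetric, strongly nondegenerate, full inner product $\langle\cdot,\cdot\rangle_{\mathcal{E}}$ (resp. $\langle\cdot,\cdot\rangle_{\mathcal{F}}$). Let $m\in\mathcal{C}^3(\mathcal{E})$ be a Courant algebroid structure on $\mathcal{E}$. Let $\Phi:\mathcal{C}^\bullet(\mathcal{E})\to\mathcal{C}^\bullet(\mathcal{F})$ be a morphism of graded Poisson algebras, i.e. a homogeneous $R$-linear map of degree $0$ compatible with the products $\wedge$ and the brackets $[\cdot,\cdot]$, and write $\Phi_k=\Phi|_{\mathcal{C}^k(\mathcal{E})}$. Then: (i) $m'=\Phi(m)$ is a Courant algebroid structure on $\mathcal{F}$; (ii) $(\Phi_0,\Phi_1)$ is a morphism of Courant algebroids from $(\mathcal{E},m)$ to $(\mathcal{F},m')$; (iii) $\Phi$ induces a morphism $H^\bullet(\mathcal{C}(\mathcal{E}),\delta_m)\to H^\bullet(\mathcal{C}(\mathcal{F}),\delta_{m'})$ of cohomologies.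
   Context: Strongly nondegenerate: $\mathcal{E}\to\operatorname{Hom}_{\mathcal{A}}(\mathcal{E},\mathcal{A})$ is an isomorphism. Full: every element of the algebra is a finite sum $\sum_i\langle x_i,y_i\rangle$. $\operatorname{Der}(\mathcal{A})$: $R$-linear derivations. $\mathcal{C}^0(\mathcal{E})=\mathcal{A}$ and $\mathcal{C}^1(\mathcal{E})=\mathcal{E}$. For $r\ge2$, $\mathcal{C}^r(\mathcal{E})$ is the set of $\mathsf{C}\in\operatorname{Hom}_R(\mathcal{E}^{\otimes_R(r-1)},\mathcal{E})$ admitting an $R$-multilinear symbol $\sigma_{\mathsf{C}}:\mathcal{E}^{\otimes(r-2)}\to\operatorname{Der}(\mathcal{A})$ with two properties: (1) $\sigma_{\mathsf{C}}(x_1,\dots,x_{r-2})\langle u,w\rangle=\langle\mathsf{C}(x_1,\dots,x_{r-2},u),w\rangle+\langle u,\mathsf{C}(x_1,\dots,x_{r-2},w)\rangle$; (2) for $r\ge3$ and $1\le i\le r-2$, $\langle\mathsf{C}(\dots,x_i,x_{i+1},\dots)+\mathsf{C}(\dots,x_{i+1},x_i,\dots),u\rangle=\sigma_{\mathsf{C}}(x_1,\dots,\widehat{x_i},\widehat{x_{i+1}},\dots,x_{r-1},u)\langle x_i,x_{i+1}\rangle$. The same definitions apply to $\mathcal{F}$ over $\mathcal{B}$. $i_x\mathsf{C}$ inserts $x$ in the first argument. $[\cdot,\cdot]$ is the unique $R$-bilinear graded skew-symmetric map $\mathcal{C}^r\times\mathcal{C}^s\to\mathcal{C}^{r+s-2}$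 with: - $[a,b]=0$ and $[a,x]=0=[x,a]$; - $[x,y]=\langle x,y\rangle$; - $[\mathsf{D},a]=\sigma_{\mathsf{D}}(a)=-[a,\mathsf{D}]$ for $\mathsf{D}\in\mathcal{C}^2$; - $[\mathsf{C},x]=i_x\mathsf{C}=(-1)^{r+1}[x,\mathsf{C}]$ for $r\ge2$; - $[[\mathsf{C}_1,\mathsf{C}_2],x]=(-1)^s[[\mathsf{C}_1,x],\mathsf{C}_2]+[\mathsf{C}_1,[\mathsf{C}_2,x]]$. $\wedge$ is the unique degree-$0$ product with $a\wedge b=ab$, $a\wedge x=ax=x\wedge a$, and $[\mathsf{C}_1\wedge\mathsf{C}_2,x]=(-1)^s[\mathsf{C}_1,x]\wedge\mathsf{C}_2+\mathsf{C}_1\wedge[\mathsf{C}_2,x]$. These make $\mathcal{C}^\bullet$ a graded Poisson algebra of degree $-2$. A Courant algebroid structure on $\mathcal{E}$ is an element $m\in\mathcal{C}^3(\mathcal{E})$, i.e. a bracket $m:\mathcal{E}\otimes_R\mathcal{E}\to\mathcal{E}$ with anchor $\sigma_m:\mathcal{E}\to\operatorname{Der}(\mathcal{A})$, satisfying the Jacobi identity $m(x,m(y,z))=m(m(x,y),z)+m(y,m(x,z))$. Equivalently, $m\in\mathcal{C}^3(\mathcal{E})$ with $[m,m]=0$. Then $\delta_m=[m,\cdot]$ satisfies $\delta_m^2=0$, and $H^\bullet(\mathcal{C}(\mathcal{E}),\delta_m)$ denotes the cohomology of $(\mathcal{C}^\bullet(\mathcal{E}),\delta_m)$. A morphism of Courant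 algebroids $(\mathcal{E}_1,[\cdot,\cdot]_1,\sigma_1)\to(\mathcal{E}_2,[\cdot,\cdot]_2,\sigma_2)$ over $\mathcal{A}_1,\mathcal{A}_2$ is a pair of $R$-linear maps $(\phi:\mathcal{A}_1\to\mathcal{A}_2,\ \psi:\mathcal{E}_1\to\mathcal{E}_2)$ satisfying, for all $a,b\in\mathcal{A}_1$ and $x,y\in\mathcal{E}_1$: - $\phi(ab)=\phi(a)\phi(b)$; - $\psi(ax)=\phi(a)\psi(x)$; - $\psi([x,y]_1)=[\psi(x),\psi(y)]_2$; - $\phi(\sigma_1(x)a)=\sigma_2(\psi(x))\phi(a)$; - $\phi(\langle x,y\rangle_1)=\langle\psi(x),\psi(y)\rangle_2$. *)

theory Defs
  imports Main
begin

record ('r, 'a, 'e) ipm =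
  alg  :: "'r \<Rightarrow> 'a"
  smul :: "'a \<Rightarrow> 'e \<Rightarrow> 'e"
  ip   :: "'e \<Rightarrow> 'e \<Rightarrow> 'a"

definition contains_rationals :: "'r::comm_ring_1 itself \<Rightarrow> bool" where
  "contains_rationals _ \<longleftrightarrow> (\<forall>n::nat. n > 0 \<longrightarrow> (\<exists>y::'r. of_nat n * y = 1))"

definition comm_algebra :: "('r::comm_ring_1, 'a::comm_ring_1, 'e) ipm \<Rightarrow> bool" where
  "comm_algebra S \<longleftrightarrow>
     (\<forall>r s. alg S (r + s) = alg S r + alg S s) \<and>
     (\<forall>r s. alg S (r * s) = alg S r * alg S s) \<and> alg S 1 = 1"

definition is_module :: "('r, 'a::comm_ring_1, 'e::ab_group_add) ipm \<Rightarrow> bool" where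
  "is_module S \<longleftrightarrow>
     (\<forall>a x y. smul S a (x + y) = smul S a x + smul S a y) \<and>
     (\<forall>a b x. smul S (a + b) x = smul S a x + smul S b x) \<and>
     (\<forall>a b x. smul S (a * b) x = smul S a (smul S b x)) \<and>
     (\<forall>x. smul S 1 x = x)"

text \<open>Finitely generated projective: a direct summand of a finite free module A^n
  (vectors nat => A supported in {..<n}).\<close>
definition fg_projective :: "('r, 'a::comm_ring_1, 'e::ab_group_add) ipm \<Rightarrow> bool" where
  "fg_projective S \<longleftrightarrow>
     (\<exists>(n::nat) (i::'e \<Rightarrow> nat \<Rightarrow> 'a) (p::(nat \<Rightarrow> 'a) \<Rightarrow> 'e).
        (\<forall>x k. n \<le> k \<longrightarrow> i x k = 0) \<and>
        (\<forall>x y. i (x + y) = (\<lambda>k. i x k + i y k)) \<and>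
        (\<forall>a x. i (smul S a x) = (\<lambda>k. a * i x k)) \<and>
        (\<forall>v w. p (\<lambda>k. v k + w k) = p v + p w) \<and>
        (\<forall>a v. p (\<lambda>k. a * v k) = smul S a (p v)) \<and>
        (\<forall>x. p (i x) = x))"

definition A_linear_form :: "('r, 'a::comm_ring_1, 'e::ab_group_add) ipm \<Rightarrow> ('e \<Rightarrow> 'a) \<Rightarrow> bool" where
  "A_linear_form S \<phi> \<longleftrightarrow> (\<forall>x y. \<phi> (x + y) = \<phi> x + \<phi> y) \<and> (\<forall>a x. \<phi> (smul S a x) = a * \<phi> x)"

definition ip_symmetric_bilinear :: "('r, 'a::comm_ring_1, 'e::ab_group_add) ipm \<Rightarrow> bool" where
  "ip_symmetric_bilinear S \<longleftrightarrow>
     (\<forall>x y. ip S x y = ip S y x) \<and> (\<forall>y. A_linear_form S (\<lambda>x. ip S x y))"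

definition strongly_nondegenerate :: "('r, 'a::comm_ring_1, 'e::ab_group_add) ipm \<Rightarrow> bool" where
  "strongly_nondegenerate S \<longleftrightarrow>
     (\<forall>\<phi>. A_linear_form S \<phi> \<longrightarrow> (\<exists>!x. \<forall>y. \<phi> y = ip S x y))"

definition ip_full :: "('r, 'a::comm_ring_1, 'e::ab_group_add) ipm \<Rightarrow> bool" where
  "ip_full S \<longleftrightarrow> (\<forall>a. \<exists>ps. a = sum_list (map (\<lambda>(x, y). ip S x y) ps))"

definition ipmod :: "('r::comm_ring_1, 'a::comm_ring_1, 'e::ab_group_add) ipm \<Rightarrow> bool" where
  "ipmod S \<longleftrightarrow> comm_algebra S \<and> is_module S \<and> fg_projective S \<and>
     ip_symmetric_bilinear S \<and> strongly_nondegenerate S \<and> ip_full S"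

definition is_der :: "('r, 'a::comm_ring_1, 'e) ipm \<Rightarrow> ('a \<Rightarrow> 'a) \<Rightarrow> bool" where
  "is_der S D \<longleftrightarrow> (\<forall>a b. D (a + b) = D a + D b) \<and>
     (\<forall>r a. D (alg S r * a) = alg S r * D a) \<and>
     (\<forall>a b. D (a * b) = D a * b + a * D b)"

definition R_multilinear :: "('r, 'a, 'e::ab_group_add) ipm \<Rightarrow> nat \<Rightarrow> ('e list \<Rightarrow> 'e) \<Rightarrow> bool" where
  "R_multilinear S n f \<longleftrightarrow>
     (\<forall>xs i x y. length xs = n \<and> i < n \<longrightarrow>
        f (xs[i := x + y]) = f (xs[i := x]) + f (xs[i := y])) \<and>
     (\<forall>xs i x t. length xs = n \<and> i < n \<longrightarrow>
        f (xs[i := smul S (alg S t) x]) = smul S (alg S t) (f (xs[i := x])))"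

definition is_symbol :: "('r, 'a::comm_ring_1, 'e::ab_group_add) ipm \<Rightarrow> nat \<Rightarrow> ('e list \<Rightarrow> 'e)
    \<Rightarrow> ('e list \<Rightarrow> 'a \<Rightarrow> 'a) \<Rightarrow> bool" where
  "is_symbol S r f \<sigma> \<longleftrightarrow>
     (\<forall>xs i x y a. length xs = r - 2 \<and> i < r - 2 \<longrightarrow>
        \<sigma> (xs[i := x + y]) a = \<sigma> (xs[i := x]) a + \<sigma> (xs[i := y]) a) \<and>
     (\<forall>xs i x t a. length xs = r - 2 \<and> i < r - 2 \<longrightarrow>
        \<sigma> (xs[i := smul S (alg S t) x]) a = alg S t * \<sigma> (xs[i := x]) a) \<and>
     (\<forall>xs. length xs = r - 2 \<longrightarrow> is_der S (\<sigma> xs)) \<and>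
     (\<forall>xs u w. length xs = r - 2 \<longrightarrow>
        \<sigma> xs (ip S u w) = ip S (f (xs @ [u])) w + ip S u (f (xs @ [w]))) \<and>
     (\<forall>xs u i. length xs = r - 1 \<and> i + 1 < r - 1 \<longrightarrow>
        ip S (f xs + f (xs[i := xs ! (i + 1), i + 1 := xs ! i])) u =
        \<sigma> (take i xs @ drop (i + 2) xs @ [u]) (ip S (xs ! i) (xs ! (i + 1))))"

text \<open>An element of C^r(E), r >= 2, represented as a function on lists of length r-1,
  extended by 0 to all other lists.\<close>
definition is_cochain :: "('r, 'a::comm_ring_1, 'e::ab_group_add) ipm \<Rightarrow> nat \<Rightarrow> ('e list \<Rightarrow> 'e) \<Rightarrow> bool" where
  "is_cochain S r f \<longleftrightarrow> 2 \<le> r \<and>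
     (\<forall>xs. length xs \<noteq> r - 1 \<longrightarrow> f xs = 0) \<and>
     R_multilinear S (r - 1) f \<and> (\<exists>\<sigma>. is_symbol S r f \<sigma>)"

text \<open>Homogeneous elements of C^\<bullet>(E). CNeg k is the (only) element of the zero space
  C^k(E) for k < 0 (convention C^k = 0 for negative k).\<close>
datatype ('a, 'e) cochain = CNeg int | C0 'a | C1 'e | CHi nat "'e list \<Rightarrow> 'e"

definition cset :: "('r, 'a::comm_ring_1, 'e::ab_group_add) ipm \<Rightarrow> int \<Rightarrow> ('a, 'e) cochain set" where
  "cset S k = (if k < 0 then {CNeg k} else if k = 0 then range C0 else if k = 1 then range C1
               else {CHi (nat k) f | f. is_cochain S (nat k) f})"

fun cadd :: "('a::comm_ring_1, 'e::ab_group_add) cochain \<Rightarrow> ('a, 'e) cochain \<Rightarrow> ('a, 'e) cochain" where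
  "cadd (CNeg k) (CNeg l) = CNeg k"
| "cadd (C0 a) (C0 b) = C0 (a + b)"
| "cadd (C1 x) (C1 y) = C1 (x + y)"
| "cadd (CHi r f) (CHi s g) = CHi r (\<lambda>xs. f xs + g xs)"
| "cadd _ _ = undefined"

fun cuminus :: "('a::comm_ring_1, 'e::ab_group_add) cochain \<Rightarrow> ('a, 'e) cochain" where
  "cuminus (CNeg k) = CNeg k"
| "cuminus (C0 a) = C0 (- a)"
| "cuminus (C1 x) = C1 (- x)"
| "cuminus (CHi r f) = CHi r (\<lambda>xs. - f xs)"

fun cscal :: "('r, 'a::comm_ring_1, 'e::ab_group_add) ipm \<Rightarrow> 'r \<Rightarrow> ('a, 'e) cochain \<Rightarrow> ('a, 'e) cochain" where
  "cscal S t (CNeg k) = CNeg k"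
| "cscal S t (C0 a) = C0 (alg S t * a)"
| "cscal S t (C1 x) = C1 (smul S (alg S t) x)"
| "cscal S t (CHi r f) = CHi r (\<lambda>xs. smul S (alg S t) (f xs))"

definition czero :: "int \<Rightarrow> ('a::comm_ring_1, 'e::ab_group_add) cochain" where
  "czero k = (if k < 0 then CNeg k else if k = 0 then C0 0 else if k = 1 then C1 0
              else CHi (nat k) (\<lambda>_. 0))"

definition csign :: "int \<Rightarrow> ('a::comm_ring_1, 'e::ab_group_add) cochain \<Rightarrow> ('a, 'e) cochain" where
  "csign n c = (if even n then c else cuminus c)"

fun ins :: "'e \<Rightarrow> ('a, 'e) cochain \<Rightarrow> ('a, 'e) cochain" where
  "ins x (CHi r f) = (if r = 2 then C1 (f [x]) else CHi (r - 1) (\<lambda>xs. f (x # xs)))"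
| "ins x _ = undefined"

fun chfun :: "('a, 'e) cochain \<Rightarrow> 'e list \<Rightarrow> 'e" where
  "chfun (CHi r f) = f"
| "chfun _ = undefined"

fun c0val :: "('a, 'e) cochain \<Rightarrow> 'a" where
  "c0val (C0 a) = a"
| "c0val _ = undefined"

fun c1val :: "('a, 'e) cochain \<Rightarrow> 'e" where
  "c1val (C1 x) = x"
| "c1val _ = undefined"

definition bracket_ax :: "('r::comm_ring_1, 'a::comm_ring_1, 'e::ab_group_add) ipm
    \<Rightarrow> (('a, 'e) cochain \<Rightarrow> ('a, 'e) cochain \<Rightarrow> ('a, 'e) cochain) \<Rightarrow> bool" where
  "bracket_ax S br \<longleftrightarrow>
     (\<forall>r s c d. 0 \<le> r \<and> 0 \<le> s \<and> c \<in> cset S r \<and> d \<in> cset S s \<longrightarrow> br c d \<in> cset S (r + s - 2)) \<and>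
     (\<forall>k s d. k < 0 \<and> 0 \<le> s \<and> d \<in> cset S s \<longrightarrow>
        br (CNeg k) d = czero (k + s - 2) \<and> br d (CNeg k) = czero (s + k - 2)) \<and>
     (\<forall>r s c c' d. 0 \<le> r \<and> 0 \<le> s \<and> c \<in> cset S r \<and> c' \<in> cset S r \<and> d \<in> cset S s \<longrightarrow>
        br (cadd c c') d = cadd (br c d) (br c' d) \<and> br d (cadd c c') = cadd (br d c) (br d c')) \<and>
     (\<forall>r s t c d. 0 \<le> r \<and> 0 \<le> s \<and> c \<in> cset S r \<and> d \<in> cset S s \<longrightarrow>
        br (cscal S t c) d = cscal S t (br c d) \<and> br d (cscal S t c) = cscal S t (br d c)) \<and>
     (\<forall>r s c d. 0 \<le> r \<and> 0 \<le> s \<and> c \<in> cset S r \<and> d \<in> cset S s \<longrightarrow>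
        br c d = csign (r * s + 1) (br d c)) \<and>
     (\<forall>x y. br (C1 x) (C1 y) = C0 (ip S x y)) \<and>
     (\<forall>f \<sigma> a. is_cochain S 2 f \<and> is_symbol S 2 f \<sigma> \<longrightarrow>
        br (CHi 2 f) (C0 a) = C0 (\<sigma> [] a) \<and> br (C0 a) (CHi 2 f) = C0 (- \<sigma> [] a)) \<and>
     (\<forall>r f x. is_cochain S r f \<longrightarrow>
        br (CHi r f) (C1 x) = ins x (CHi r f) \<and>
        br (C1 x) (CHi r f) = csign (int r + 1) (ins x (CHi r f))) \<and>
     (\<forall>r s c1 c2 x. 0 \<le> r \<and> 0 \<le> s \<and> c1 \<in> cset S r \<and> c2 \<in> cset S s \<longrightarrow>
        br (br c1 c2) (C1 x) =
          cadd (csign s (br (br c1 (C1 x)) c2)) (br c1 (br c2 (C1 x))))"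

definition wedge_ax :: "('r::comm_ring_1, 'a::comm_ring_1, 'e::ab_group_add) ipm
    \<Rightarrow> (('a, 'e) cochain \<Rightarrow> ('a, 'e) cochain \<Rightarrow> ('a, 'e) cochain)
    \<Rightarrow> (('a, 'e) cochain \<Rightarrow> ('a, 'e) cochain \<Rightarrow> ('a, 'e) cochain) \<Rightarrow> bool" where
  "wedge_ax S br wd \<longleftrightarrow>
     (\<forall>r s c d. 0 \<le> r \<and> 0 \<le> s \<and> c \<in> cset S r \<and> d \<in> cset S s \<longrightarrow> wd c d \<in> cset S (r + s)) \<and>
     (\<forall>k s d. k < 0 \<and> 0 \<le> s \<and> d \<in> cset S s \<longrightarrow>
        wd (CNeg k) d = czero (k + s) \<and> wd d (CNeg k) = czero (s + k)) \<and>
     (\<forall>r s c c' d. 0 \<le> r \<and> 0 \<le> s \<and> c \<in> cset S r \<and> c' \<in> cset S r \<and> d \<in> cset S s \<longrightarrow>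
        wd (cadd c c') d = cadd (wd c d) (wd c' d) \<and> wd d (cadd c c') = cadd (wd d c) (wd d c')) \<and>
     (\<forall>r s t c d. 0 \<le> r \<and> 0 \<le> s \<and> c \<in> cset S r \<and> d \<in> cset S s \<longrightarrow>
        wd (cscal S t c) d = cscal S t (wd c d) \<and> wd d (cscal S t c) = cscal S t (wd d c)) \<and>
     (\<forall>a b. wd (C0 a) (C0 b) = C0 (a * b)) \<and>
     (\<forall>a x. wd (C0 a) (C1 x) = C1 (smul S a x) \<and> wd (C1 x) (C0 a) = C1 (smul S a x)) \<and>
     (\<forall>r s c1 c2 x. 0 \<le> r \<and> 0 \<le> s \<and> c1 \<in> cset S r \<and> c2 \<in> cset S s \<longrightarrow>
        br (wd c1 c2) (C1 x) =
          cadd (csign s (wd (br c1 (C1 x)) c2)) (wd c1 (br c2 (C1 x))))"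

definition courant :: "('r::comm_ring_1, 'a::comm_ring_1, 'e::ab_group_add) ipm \<Rightarrow> ('a, 'e) cochain \<Rightarrow> bool" where
  "courant S m \<longleftrightarrow> m \<in> cset S 3 \<and>
     (\<forall>x y z. chfun m [x, chfun m [y, z]] =
                chfun m [chfun m [x, y], z] + chfun m [y, chfun m [x, z]])"

definition courant_morphism ::
  "('r::comm_ring_1, 'a::comm_ring_1, 'e::ab_group_add) ipm \<Rightarrow> ('r, 'b::comm_ring_1, 'f::ab_group_add) ipm
   \<Rightarrow> ('e \<Rightarrow> 'e \<Rightarrow> 'e) \<Rightarrow> ('e \<Rightarrow> 'a \<Rightarrow> 'a) \<Rightarrow> ('f \<Rightarrow> 'f \<Rightarrow> 'f) \<Rightarrow> ('f \<Rightarrow> 'b \<Rightarrow> 'b)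
   \<Rightarrow> ('a \<Rightarrow> 'b) \<Rightarrow> ('e \<Rightarrow> 'f) \<Rightarrow> bool" where
  "courant_morphism S1 S2 br1 an1 br2 an2 \<phi> \<psi> \<longleftrightarrow>
     (\<forall>a b. \<phi> (a + b) = \<phi> a + \<phi> b) \<and> (\<forall>t a. \<phi> (alg S1 t * a) = alg S2 t * \<phi> a) \<and>
     (\<forall>x y. \<psi> (x + y) = \<psi> x + \<psi> y) \<and>
     (\<forall>t x. \<psi> (smul S1 (alg S1 t) x) = smul S2 (alg S2 t) (\<psi> x)) \<and>
     (\<forall>a b. \<phi> (a * b) = \<phi> a * \<phi> b) \<and>
     (\<forall>a x. \<psi> (smul S1 a x) = smul S2 (\<phi> a) (\<psi> x)) \<and>
     (\<forall>x y. \<psi> (br1 x y) = br2 (\<psi> x) (\<psi> y)) \<and>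
     (\<forall>x a. \<phi> (an1 x a) = an2 (\<psi> x) (\<phi> a)) \<and>
     (\<forall>x y. \<phi> (ip S1 x y) = ip S2 (\<psi> x) (\<psi> y))"

definition gpa_morphism ::
  "('r::comm_ring_1, 'a::comm_ring_1, 'e::ab_group_add) ipm \<Rightarrow> ('r, 'b::comm_ring_1, 'f::ab_group_add) ipm
   \<Rightarrow> (('a, 'e) cochain \<Rightarrow> ('a, 'e) cochain \<Rightarrow> ('a, 'e) cochain)
   \<Rightarrow> (('a, 'e) cochain \<Rightarrow> ('a, 'e) cochain \<Rightarrow> ('a, 'e) cochain)
   \<Rightarrow> (('b, 'f) cochain \<Rightarrow> ('b, 'f) cochain \<Rightarrow> ('b, 'f) cochain)
   \<Rightarrow> (('b, 'f) cochain \<Rightarrow> ('b, 'f) cochain \<Rightarrow> ('b, 'f) cochain)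
   \<Rightarrow> (('a, 'e) cochain \<Rightarrow> ('b, 'f) cochain) \<Rightarrow> bool" where
  "gpa_morphism S1 S2 br1 wd1 br2 wd2 \<Phi> \<longleftrightarrow>
     (\<forall>k::nat. \<forall>c \<in> cset S1 (int k). \<Phi> c \<in> cset S2 (int k)) \<and>
     (\<forall>k::nat. \<forall>c \<in> cset S1 (int k). \<forall>c' \<in> cset S1 (int k). \<Phi> (cadd c c') = cadd (\<Phi> c) (\<Phi> c')) \<and>
     (\<forall>k::nat. \<forall>t. \<forall>c \<in> cset S1 (int k). \<Phi> (cscal S1 t c) = cscal S2 t (\<Phi> c)) \<and>
     (\<forall>r s::nat. \<forall>c \<in> cset S1 (int r). \<forall>d \<in> cset S1 (int s). \<Phi> (wd1 c d) = wd2 (\<Phi> c) (\<Phi> d)) \<and>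
     (\<forall>r s::nat. 2 \<le> r + s \<longrightarrow> (\<forall>c \<in> cset S1 (int r). \<forall>d \<in> cset S1 (int s).
        \<Phi> (br1 c d) = br2 (\<Phi> c) (\<Phi> d)))"

text \<open>Phi induces a (well-defined) map H^k(C(E),delta1) -> H^k(C(F),delta2) for every k:
  it maps k-cocycles to k-cocycles and k-coboundaries to k-coboundaries.\<close>
definition induces_cohomology_map ::
  "('r::comm_ring_1, 'a::comm_ring_1, 'e::ab_group_add) ipm \<Rightarrow> ('r, 'b::comm_ring_1, 'f::ab_group_add) ipm
   \<Rightarrow> (('a, 'e) cochain \<Rightarrow> ('a, 'e) cochain) \<Rightarrow> (('b, 'f) cochain \<Rightarrow> ('b, 'f) cochain)
   \<Rightarrow> (('a, 'e) cochain \<Rightarrow> ('b, 'f) cochain) \<Rightarrow> bool" where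
  "induces_cohomology_map S1 S2 \<delta>1 \<delta>2 \<Phi> \<longleftrightarrow>
     (\<forall>k::nat. \<forall>c \<in> cset S1 (int k). \<delta>1 c = czero (int k + 1) \<longrightarrow> \<delta>2 (\<Phi> c) = czero (int k + 1)) \<and>
     (\<forall>k::nat. \<forall>b \<in> cset S1 (int k). \<exists>b' \<in> cset S2 (int k). \<Phi> (\<delta>1 b) = \<delta>2 b')"

end

theory Submission
  imports Defs
begin

text \<open>A Courant algebroid structure \<open>m\<close> is recovered from the graded Poisson algebra by
  derived brackets: \<open>m(x, y) = [[m, x], y]\<close>, the anchor is \<open>\<sigma>_m(x) a = [[m, x], a]\<close>, and the
  inner product is \<open>[x, y]\<close>. Expanding \<open>[m, m]\<close> with the Leibniz rule shows that its value
  at \<open>(x, y, z)\<close> is minus twice the Jacobiator of \<open>m\<close>, so (as 2 is invertible) the Jacobi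
  identity is equivalent to \<open>[m, m] = 0\<close>. A morphism \<open>\<Phi>\<close> of graded Poisson algebras commutes
  with all these expressions and maps \<open>0\<close> to \<open>0\<close>, which gives (i) and (ii); (iii) follows
  from \<open>\<Phi> [m, c] = [\<Phi> m, \<Phi> c]\<close>.\<close>

lemma bracket_ax_cset:
  "bracket_ax S br \<Longrightarrow> 0 \<le> r \<Longrightarrow> 0 \<le> s \<Longrightarrow> c \<in> cset S r \<Longrightarrow> d \<in> cset S s
    \<Longrightarrow> br c d \<in> cset S (r + s - 2)"
  unfolding bracket_ax_def by (elim conjE) meson

lemma bracket_ax_skew:
  "bracket_ax S br \<Longrightarrow> 0 \<le> r \<Longrightarrow> 0 \<le> s \<Longrightarrow> c \<in> cset S r \<Longrightarrow> d \<in> cset S s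
    \<Longrightarrow> br c d = csign (r * s + 1) (br d c)"
  unfolding bracket_ax_def by (elim conjE) meson

lemma bracket_ax_C1_C1: "bracket_ax S br \<Longrightarrow> br (C1 x) (C1 y) = C0 (ip S x y)"
  unfolding bracket_ax_def by (elim conjE) meson

lemma bracket_ax_CHi2_C0:
  "bracket_ax S br \<Longrightarrow> is_cochain S 2 f \<Longrightarrow> is_symbol S 2 f \<sigma> \<Longrightarrow> br (CHi 2 f) (C0 a) = C0 (\<sigma> [] a)"
  unfolding bracket_ax_def by (elim conjE) meson

lemma bracket_ax_CHi_C1:
  "bracket_ax S br \<Longrightarrow> is_cochain S r f \<Longrightarrow> br (CHi r f) (C1 x) = ins x (CHi r f)"
  unfolding bracket_ax_def by (elim conjE) meson

lemma bracket_ax_leibniz: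
  "bracket_ax S br \<Longrightarrow> 0 \<le> r \<Longrightarrow> 0 \<le> s \<Longrightarrow> c \<in> cset S r \<Longrightarrow> d \<in> cset S s
    \<Longrightarrow> br (br c d) (C1 x) = cadd (csign s (br (br c (C1 x)) d)) (br c (br d (C1 x)))"
  unfolding bracket_ax_def by (elim conjE) meson

lemma wedge_ax_C0_C0: "wedge_ax S br wd \<Longrightarrow> wd (C0 a) (C0 b) = C0 (a * b)"
  unfolding wedge_ax_def by (elim conjE) meson

lemma wedge_ax_C0_C1: "wedge_ax S br wd \<Longrightarrow> wd (C0 a) (C1 x) = C1 (smul S a x)"
  unfolding wedge_ax_def by (elim conjE) meson

lemma gpa_morphism_cset:
  "gpa_morphism S1 S2 br1 wd1 br2 wd2 \<Phi> \<Longrightarrow> c \<in> cset S1 (int k) \<Longrightarrow> \<Phi> c \<in> cset S2 (int k)"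
  unfolding gpa_morphism_def by blast

lemma gpa_morphism_cadd:
  "gpa_morphism S1 S2 br1 wd1 br2 wd2 \<Phi> \<Longrightarrow> c \<in> cset S1 (int k) \<Longrightarrow> c' \<in> cset S1 (int k)
    \<Longrightarrow> \<Phi> (cadd c c') = cadd (\<Phi> c) (\<Phi> c')"
  unfolding gpa_morphism_def by blast

lemma gpa_morphism_cscal:
  "gpa_morphism S1 S2 br1 wd1 br2 wd2 \<Phi> \<Longrightarrow> c \<in> cset S1 (int k) \<Longrightarrow> \<Phi> (cscal S1 t c) = cscal S2 t (\<Phi> c)"
  unfolding gpa_morphism_def by blast

lemma gpa_morphism_wedge:
  "gpa_morphism S1 S2 br1 wd1 br2 wd2 \<Phi> \<Longrightarrow> c \<in> cset S1 (int r) \<Longrightarrow> d \<in> cset S1 (int s)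
    \<Longrightarrow> \<Phi> (wd1 c d) = wd2 (\<Phi> c) (\<Phi> d)"
  unfolding gpa_morphism_def by blast

lemma gpa_morphism_bracket:
  "gpa_morphism S1 S2 br1 wd1 br2 wd2 \<Phi> \<Longrightarrow> 2 \<le> r + s \<Longrightarrow> c \<in> cset S1 (int r) \<Longrightarrow> d \<in> cset S1 (int s)
    \<Longrightarrow> \<Phi> (br1 c d) = br2 (\<Phi> c) (\<Phi> d)"
  unfolding gpa_morphism_def by blast

lemma cset_0_iff: "c \<in> cset S 0 \<longleftrightarrow> (\<exists>a. c = C0 a)"
  by (auto simp: cset_def)

lemma cset_1_iff: "c \<in> cset S 1 \<longleftrightarrow> (\<exists>x. c = C1 x)"
  by (auto simp: cset_def)

lemma C0_in_cset: "C0 a \<in> cset S 0"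
  by (simp add: cset_0_iff)

lemma C1_in_cset: "C1 x \<in> cset S 1"
  by (simp add: cset_1_iff)

lemma CHi_in_cset_iff: "2 \<le> n \<Longrightarrow> CHi n f \<in> cset S (int n) \<longleftrightarrow> is_cochain S n f"
  by (auto simp: cset_def)

lemma cset_CHiE:
  assumes "c \<in> cset S (int n)" "2 \<le> n"
  obtains f where "c = CHi n f" "is_cochain S n f"
  using assms by (auto simp: cset_def)

lemma cset_eq_czero_iff_cadd_idem:
  "c \<in> cset S (int n) \<Longrightarrow> c = czero (int n) \<longleftrightarrow> cadd c c = c"
  by (auto simp: cset_def czero_def fun_eq_iff)

lemma gpa_morphism_czero:
  assumes \<Phi>: "gpa_morphism S1 S2 br1 wd1 br2 wd2 \<Phi>" and z: "czero (int n) \<in> cset S1 (int n)"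
  shows "\<Phi> (czero (int n)) = czero (int n)"
proof -
  have "cadd (\<Phi> (czero (int n))) (\<Phi> (czero (int n))) = \<Phi> (cadd (czero (int n)) (czero (int n)))"
    using gpa_morphism_cadd[OF \<Phi> z z] by simp
  also have "\<dots> = \<Phi> (czero (int n))"
    using cset_eq_czero_iff_cadd_idem[OF z] by simp
  finally show ?thesis
    using cset_eq_czero_iff_cadd_idem[OF gpa_morphism_cset[OF \<Phi> z]] by simp
qed

lemma is_symbol_shift:
  assumes "is_symbol S (Suc r) f \<sigma>" "2 \<le> r"
  shows "is_symbol S r (\<lambda>xs. f (x # xs)) (\<lambda>xs. \<sigma> (x # xs))"
proof -
  have r: "Suc r - 2 = Suc (r - 2)" "Suc r - 1 = Suc (r - 1)" using assms(2) by auto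
  show ?thesis
    using assms(1) unfolding is_symbol_def r
    \<comment> \<open>each clause is the corresponding clause for \<open>f\<close> at \<open>x # xs\<close> and index \<open>Suc i\<close>\<close>
    apply (intro conjI allI impI)
    subgoal for xs i y z a by (drule conjunct1, drule spec[of _ "x#xs"], drule spec[of _ "Suc i"]) auto
    subgoal for xs i y t a by (drule conjunct2, drule conjunct1, drule spec[of _ "x#xs"], drule spec[of _ "Suc i"]) auto
    subgoal for xs by auto
    subgoal for xs u w by auto
    subgoal for xs u i by (elim conjE, drule spec[of _ "x#xs"], drule spec[of _ u], drule spec[of _ "Suc i"]) auto
    done
qed

lemma bracket_ax_insert_CHi:
  assumes B: "bracket_ax S br" and c: "c \<in> cset S (int n)" and n: "3 \<le> n"
  shows "br c (C1 x) = CHi (n - 1) (\<lambda>xs. chfun c (x # xs))"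
proof -
  obtain f where "c = CHi n f" "is_cochain S n f"
    using c n cset_CHiE[of c S n] by auto
  then show ?thesis
    using bracket_ax_CHi_C1[OF B] n by simp
qed

lemma bracket_ax_insert_C1:
  assumes B: "bracket_ax S br" and c: "c \<in> cset S 2"
  shows "br c (C1 x) = C1 (chfun c [x])"
proof -
  obtain f where "c = CHi 2 f" "is_cochain S 2 f"
    using c cset_CHiE[of c S 2] by auto
  then show ?thesis
    using bracket_ax_CHi_C1[OF B] by simp
qed

lemma bracket_ax_derived_bracket:
  assumes B: "bracket_ax S br" and m: "m \<in> cset S 3"
  shows "br (br m (C1 x)) (C1 y) = C1 (chfun m [x, y])"
proof -
  have "br m (C1 x) \<in> cset S 2"
    using bracket_ax_cset[OF B _ _ m C1_in_cset] by simp
  then show ?thesis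
    using bracket_ax_insert_C1[OF B] bracket_ax_insert_CHi[OF B, of m 3] m by simp
qed

lemma bracket_ax_derived_anchor:
  assumes B: "bracket_ax S br" and m: "m \<in> cset S 3" and \<sigma>: "is_symbol S 3 (chfun m) \<sigma>"
  shows "br (br m (C1 x)) (C0 a) = C0 (\<sigma> [x] a)"
proof -
  have "br m (C1 x) \<in> cset S 2"
    using bracket_ax_cset[OF B _ _ m C1_in_cset] by simp
  then have "is_cochain S 2 (\<lambda>xs. chfun m (x # xs))"
    using bracket_ax_insert_CHi[OF B, of m 3] m CHi_in_cset_iff[of 2 _ S] by simp
  moreover have "is_symbol S 2 (\<lambda>xs. chfun m (x # xs)) (\<lambda>xs. \<sigma> (x # xs))"
    using is_symbol_shift[of S 2] \<sigma> by (simp add: numeral_3_eq_3)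
  ultimately show ?thesis
    using bracket_ax_CHi2_C0[OF B] bracket_ax_insert_CHi[OF B, of m 3] m by simp
qed

definition jacobiator :: "('e::ab_group_add list \<Rightarrow> 'e) \<Rightarrow> 'e \<Rightarrow> 'e \<Rightarrow> 'e \<Rightarrow> 'e" where
  "jacobiator f x y z = f [x, f [y, z]] - f [f [x, y], z] - f [y, f [x, z]]"

lemma bracket_insert_self_jacobiator:
  assumes B: "bracket_ax S br" and m: "m \<in> cset S 3"
  shows "chfun (br (br m (C1 x)) m) [y, z] = jacobiator (chfun m) x y z"
proof -
  define f where "f = chfun m"
  define D where "D w = br m (C1 w)" for w
  have D_cset: "D w \<in> cset S 2" for w
    using bracket_ax_cset[OF B _ _ m C1_in_cset] by (simp add: D_def)
  have D_C1: "br (D w) (C1 v) = C1 (f [w, v])" for w v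
    using bracket_ax_derived_bracket[OF B m] by (simp add: D_def f_def)
  have C1_D: "br (C1 v) (D w) = C1 (- f [w, v])" for w v
    using bracket_ax_skew[OF B _ _ C1_in_cset D_cset] D_C1 by (simp add: csign_def)
  have C1_m: "br (C1 v) m = D v" for v
    using bracket_ax_skew[OF B _ _ C1_in_cset m] by (simp add: csign_def D_def)
  have Dm_cset: "br (D x) m \<in> cset S (int 3)"
    using bracket_ax_cset[OF B _ _ D_cset m] by simp
  have DD_cset: "br (D x) (D y) \<in> cset S 2"
    using bracket_ax_cset[OF B _ _ D_cset D_cset] by simp
  then obtain k where k: "br (D x) (D y) = CHi 2 k"
    by (rule cset_CHiE[where n = 2, simplified]) simp
  have "CHi 2 (\<lambda>xs. chfun (br (D x) m) (y # xs)) = br (br (D x) m) (C1 y)"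
    using bracket_ax_insert_CHi[OF B Dm_cset] by simp
  also have "\<dots> = cadd (cuminus (D (f [x, y]))) (br (D x) (D y))"
    using bracket_ax_leibniz[OF B _ _ D_cset m] D_C1 C1_m by (simp add: csign_def D_def)
  finally have Dm_y: "chfun (br (D x) m) [y, z] = - f [f [x, y], z] + k [z]"
    using k bracket_ax_insert_CHi[OF B, of m 3] m by (simp add: fun_eq_iff D_def f_def)
  have "C1 (k [z]) = br (br (D x) (D y)) (C1 z)"
    using bracket_ax_insert_C1[OF B DD_cset] k by simp
  also have "\<dots> = C1 (- f [y, f [x, z]] + f [x, f [y, z]])"
    using bracket_ax_leibniz[OF B _ _ D_cset D_cset] D_C1 C1_D by (simp add: csign_def)
  finally have "k [z] = - f [y, f [x, z]] + f [x, f [y, z]]"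
    by simp
  with Dm_y show ?thesis
    by (simp add: jacobiator_def D_def f_def algebra_simps)
qed

lemma bracket_self_jacobiator:
  assumes B: "bracket_ax S br" and m: "m \<in> cset S 3"
  shows "chfun (br m m) [x, y, z] = - (jacobiator (chfun m) x y z + jacobiator (chfun m) x y z)"
proof -
  have mx_cset: "br m (C1 x) \<in> cset S 2"
    using bracket_ax_cset[OF B _ _ m C1_in_cset] by simp
  have "br (br m (C1 x)) m \<in> cset S (int 3)"
    using bracket_ax_cset[OF B _ _ mx_cset m] by simp
  then obtain e where e: "br (br m (C1 x)) m = CHi 3 e"
    by (rule cset_CHiE) simp
  have mm_cset: "br m m \<in> cset S (int 4)"
    using bracket_ax_cset[OF B _ _ m m] by simp
  have "CHi 3 (\<lambda>xs. chfun (br m m) (x # xs)) = br (br m m) (C1 x)"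
    using bracket_ax_insert_CHi[OF B mm_cset] by simp
  also have "\<dots> = cadd (cuminus (br (br m (C1 x)) m)) (cuminus (br (br m (C1 x)) m))"
    using bracket_ax_leibniz[OF B _ _ m m] bracket_ax_skew[OF B _ _ m mx_cset]
    by (simp add: csign_def)
  finally have "chfun (br m m) [x, y, z] = - e [y, z] + - e [y, z]"
    using e by (simp add: fun_eq_iff)
  then show ?thesis
    using bracket_insert_self_jacobiator[OF B m, of x y z] e by simp
qed

lemma cset_eq_czero_iff:
  assumes c: "c \<in> cset S (int n)" and n: "2 \<le> n"
  shows "c = czero (int n) \<longleftrightarrow> (\<forall>xs. length xs = n - 1 \<longrightarrow> chfun c xs = 0)"
proof -
  obtain f where f: "c = CHi n f" "is_cochain S n f"
    using cset_CHiE[OF c n] .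
  then have "f = (\<lambda>_. 0) \<longleftrightarrow> (\<forall>xs. length xs = n - 1 \<longrightarrow> f xs = 0)"
    unfolding is_cochain_def by (metis (mono_tags))
  with f n show ?thesis
    by (simp add: czero_def)
qed

lemma bracket_self_eq_czero_iff:
  assumes B: "bracket_ax S br" and m: "m \<in> cset S 3"
  shows "br m m = czero 4 \<longleftrightarrow> (\<forall>x y z. jacobiator (chfun m) x y z + jacobiator (chfun m) x y z = 0)"
proof -
  have "br m m \<in> cset S (int 4)"
    using bracket_ax_cset[OF B _ _ m m] by simp
  then have "br m m = czero 4 \<longleftrightarrow> (\<forall>xs. length xs = 3 \<longrightarrow> chfun (br m m) xs = 0)"
    using cset_eq_czero_iff[of "br m m" S 4] by simp
  also have "\<dots> \<longleftrightarrow> (\<forall>x y z. chfun (br m m) [x, y, z] = 0)"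
    by (auto simp: numeral_3_eq_3 length_Suc_conv)
  finally show ?thesis
    by (simp only: bracket_self_jacobiator[OF B m] neg_equal_0_iff_equal)
qed

lemma courant_iff_jacobiator:
  "courant S m \<longleftrightarrow> m \<in> cset S 3 \<and> (\<forall>x y z. jacobiator (chfun m) x y z = 0)"
  by (simp add: courant_def jacobiator_def algebra_simps)

lemma double_eq_zero_imp_eq_zero:
  fixes S :: "('r::comm_ring_1, 'a::comm_ring_1, 'e::ab_group_add) ipm" and v :: 'e
  assumes "contains_rationals TYPE('r)" "comm_algebra S" "is_module S" "v + v = 0"
  shows "v = 0"
proof -
  have smul_add: "smul S a (x + y) = smul S a x + smul S a y"
    and add_smul: "smul S (a + b) x = smul S a x + smul S b x"
    and one_smul: "smul S 1 x = x" for a b x y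
    using assms(3) by (simp_all add: is_module_def)
  obtain h :: 'r where "of_nat 2 * h = 1"
    using assms(1) unfolding contains_rationals_def by (metis zero_less_numeral)
  then have "alg S h + alg S h = 1"
    using assms(2) unfolding comm_algebra_def by (metis mult_2 of_nat_numeral)
  then have "v = smul S (alg S h + alg S h) v"
    by (simp add: one_smul)
  also have "\<dots> = smul S (alg S h) (v + v)"
    by (simp only: smul_add add_smul)
  also have "\<dots> = 0"
    using assms(4) smul_add[of _ 0 0] by simp
  finally show ?thesis .
qed

lemma courant_imp_bracket_self_eq_czero:
  "bracket_ax S br \<Longrightarrow> courant S m \<Longrightarrow> br m m = czero 4"
  by (simp add: bracket_self_eq_czero_iff courant_iff_jacobiator)

lemma bracket_self_eq_czero_imp_courant:
  fixes S :: "('r::comm_ring_1, 'a::comm_ring_1, 'e::ab_group_add) ipm"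
  assumes "contains_rationals TYPE('r)" "comm_algebra S" "is_module S" "bracket_ax S br"
    and m: "m \<in> cset S 3" and mm: "br m m = czero 4"
  shows "courant S m"
proof -
  have "jacobiator (chfun m) x y z = 0" for x y z
    using mm bracket_self_eq_czero_iff[OF assms(4) m] double_eq_zero_imp_eq_zero[OF assms(1-3)]
    by blast
  with m show ?thesis
    by (simp add: courant_iff_jacobiator)
qed

lemma gpa_morphism_preserves_courant:
  fixes SE :: "('r::comm_ring_1, 'a::comm_ring_1, 'e::ab_group_add) ipm"
    and SF :: "('r, 'b::comm_ring_1, 'f::ab_group_add) ipm"
  assumes "contains_rationals TYPE('r)" "comm_algebra SF" "is_module SF"
    and BE: "bracket_ax SE brE" and BF: "bracket_ax SF brF"
    and \<Phi>: "gpa_morphism SE SF brE wdE brF wdF \<Phi>" and m: "courant SE m"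
  shows "courant SF (\<Phi> m)"
proof -
  have mE: "m \<in> cset SE (int 3)"
    using m by (simp add: courant_def)
  have mmE: "brE m m = czero 4"
    using courant_imp_bracket_self_eq_czero[OF BE m] .
  have "czero (int 4) \<in> cset SE (int 4)"
    using bracket_ax_cset[OF BE _ _ mE mE] mmE by simp
  then have "\<Phi> (brE m m) = czero 4"
    using gpa_morphism_czero[OF \<Phi>, of 4] mmE by simp
  then have "brF (\<Phi> m) (\<Phi> m) = czero 4"
    using gpa_morphism_bracket[OF \<Phi> _ mE mE] by simp
  moreover have "\<Phi> m \<in> cset SF 3"
    using gpa_morphism_cset[OF \<Phi> mE] by simp
  ultimately show ?thesis
    using bracket_self_eq_czero_imp_courant[OF assms(1-3) BF] by blast
qed

lemma gpa_morphism_C0: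
  "gpa_morphism S1 S2 br1 wd1 br2 wd2 \<Phi> \<Longrightarrow> \<Phi> (C0 a) = C0 (c0val (\<Phi> (C0 a)))"
  using gpa_morphism_cset[of S1 S2 br1 wd1 br2 wd2 \<Phi> "C0 a" 0] by (auto simp: cset_0_iff)

lemma gpa_morphism_C1:
  "gpa_morphism S1 S2 br1 wd1 br2 wd2 \<Phi> \<Longrightarrow> \<Phi> (C1 x) = C1 (c1val (\<Phi> (C1 x)))"
  using gpa_morphism_cset[of S1 S2 br1 wd1 br2 wd2 \<Phi> "C1 x" 1] by (auto simp: cset_1_iff)

lemma gpa_morphism_iterated_bracket:
  assumes B: "bracket_ax S1 br1" and \<Phi>: "gpa_morphism S1 S2 br1 wd1 br2 wd2 \<Phi>"
    and m: "m \<in> cset S1 3" and d: "d \<in> cset S1 (int k)"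
  shows "\<Phi> (br1 (br1 m (C1 x)) d) = br2 (br2 (\<Phi> m) (\<Phi> (C1 x))) (\<Phi> d)"
proof -
  have mx: "br1 m (C1 x) \<in> cset S1 (int 2)"
    using bracket_ax_cset[OF B _ _ m C1_in_cset] by simp
  have "\<Phi> (br1 (br1 m (C1 x)) d) = br2 (\<Phi> (br1 m (C1 x))) (\<Phi> d)"
    using gpa_morphism_bracket[OF \<Phi> _ mx d] by simp
  also have "\<Phi> (br1 m (C1 x)) = br2 (\<Phi> m) (\<Phi> (C1 x))"
    using gpa_morphism_bracket[OF \<Phi>, of 3 1] m C1_in_cset by fastforce
  finally show ?thesis .
qed

lemma gpa_morphism_courant_morphism:
  assumes BE: "bracket_ax SE brE" and WE: "wedge_ax SE brE wdE"
    and BF: "bracket_ax SF brF" and WF: "wedge_ax SF brF wdF"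
    and \<Phi>: "gpa_morphism SE SF brE wdE brF wdF \<Phi>" and m: "m \<in> cset SE 3"
    and \<sigma>: "is_symbol SE 3 (chfun m) \<sigma>" and \<sigma>': "is_symbol SF 3 (chfun (\<Phi> m)) \<sigma>'"
  shows "courant_morphism SE SF
           (\<lambda>x y. chfun m [x, y]) (\<lambda>x a. \<sigma> [x] a)
           (\<lambda>x y. chfun (\<Phi> m) [x, y]) (\<lambda>x a. \<sigma>' [x] a)
           (\<lambda>a. c0val (\<Phi> (C0 a))) (\<lambda>x. c1val (\<Phi> (C1 x)))"
proof -
  define \<phi> where "\<phi> a = c0val (\<Phi> (C0 a))" for a
  define \<psi> where "\<psi> x = c1val (\<Phi> (C1 x))" for x
  have \<Phi>0: "\<Phi> (C0 a) = C0 (\<phi> a)" for a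
    using gpa_morphism_C0[OF \<Phi>] by (simp add: \<phi>_def)
  have \<Phi>1: "\<Phi> (C1 x) = C1 (\<psi> x)" for x
    using gpa_morphism_C1[OF \<Phi>] by (simp add: \<psi>_def)
  have \<Phi>m: "\<Phi> m \<in> cset SF 3"
    using gpa_morphism_cset[OF \<Phi>, of m 3] m by simp
  have C0': "C0 a \<in> cset SE (int 0)" and C1': "C1 x \<in> cset SE (int 1)" for a x
    by (simp_all add: C0_in_cset C1_in_cset)
  have "C1 (\<psi> (chfun m [x, y])) = \<Phi> (brE (brE m (C1 x)) (C1 y))" for x y
    using bracket_ax_derived_bracket[OF BE m] \<Phi>1 by simp
  also have "\<dots> x y = C1 (chfun (\<Phi> m) [\<psi> x, \<psi> y])" for x y
    using gpa_morphism_iterated_bracket[OF BE \<Phi> m C1'] bracket_ax_derived_bracket[OF BF \<Phi>m] \<Phi>1 by simp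
  finally have bracket: "\<psi> (chfun m [x, y]) = chfun (\<Phi> m) [\<psi> x, \<psi> y]" for x y
    by simp
  have "C0 (\<phi> (\<sigma> [x] a)) = \<Phi> (brE (brE m (C1 x)) (C0 a))" for x a
    using bracket_ax_derived_anchor[OF BE m \<sigma>] \<Phi>0 by simp
  also have "\<dots> x a = C0 (\<sigma>' [\<psi> x] (\<phi> a))" for x a
    using gpa_morphism_iterated_bracket[OF BE \<Phi> m C0'] bracket_ax_derived_anchor[OF BF \<Phi>m \<sigma>'] \<Phi>0 \<Phi>1
    by simp
  finally have anchor: "\<phi> (\<sigma> [x] a) = \<sigma>' [\<psi> x] (\<phi> a)" for x a
    by simp
  have "\<phi> (a + b) = \<phi> a + \<phi> b" "\<phi> (alg SE t * a) = alg SF t * \<phi> a" for a b t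
    using gpa_morphism_cadd[OF \<Phi> C0' C0'] gpa_morphism_cscal[OF \<Phi> C0'] \<Phi>0 by simp_all
  moreover have "\<psi> (x + y) = \<psi> x + \<psi> y" "\<psi> (smul SE (alg SE t) x) = smul SF (alg SF t) (\<psi> x)"
    for x y t
    using gpa_morphism_cadd[OF \<Phi> C1' C1'] gpa_morphism_cscal[OF \<Phi> C1'] \<Phi>1 by simp_all
  moreover have "\<phi> (a * b) = \<phi> a * \<phi> b" "\<psi> (smul SE a x) = smul SF (\<phi> a) (\<psi> x)" for a b x
    using gpa_morphism_wedge[OF \<Phi> C0' C0'] gpa_morphism_wedge[OF \<Phi> C0' C1'] \<Phi>0 \<Phi>1
      wedge_ax_C0_C0[OF WE] wedge_ax_C0_C0[OF WF] wedge_ax_C0_C1[OF WE] wedge_ax_C0_C1[OF WF]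
    by simp_all
  moreover have "\<phi> (ip SE x y) = ip SF (\<psi> x) (\<psi> y)" for x y
    using gpa_morphism_bracket[OF \<Phi> _ C1' C1'] \<Phi>0 \<Phi>1 bracket_ax_C1_C1[OF BE] bracket_ax_C1_C1[OF BF]
    by simp
  ultimately show ?thesis
    unfolding courant_morphism_def \<phi>_def[symmetric] \<psi>_def[symmetric]
    using bracket anchor by blast
qed

lemma gpa_morphism_induces_cohomology_map:
  assumes BE: "bracket_ax SE brE" and \<Phi>: "gpa_morphism SE SF brE wdE brF wdF \<Phi>"
    and m: "m \<in> cset SE 3"
  shows "induces_cohomology_map SE SF (brE m) (brF (\<Phi> m)) \<Phi>"
  unfolding induces_cohomology_map_def
proof (intro conjI allI ballI impI)
  have m': "m \<in> cset SE (int 3)"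
    using m by simp
  fix k :: nat
  {
    fix c assume c: "c \<in> cset SE (int k)" and closed: "brE m c = czero (int k + 1)"
    have "brE m c \<in> cset SE (int (Suc k))"
      using bracket_ax_cset[OF BE _ _ m c] by simp
    then have "\<Phi> (brE m c) = czero (int k + 1)"
      using gpa_morphism_czero[OF \<Phi>, of "Suc k"] closed by (simp add: add.commute)
    then show "brF (\<Phi> m) (\<Phi> c) = czero (int k + 1)"
      using gpa_morphism_bracket[OF \<Phi> _ m' c] by simp
  }
  fix b assume b: "b \<in> cset SE (int k)"
  show "\<exists>b' \<in> cset SF (int k). \<Phi> (brE m b) = brF (\<Phi> m) b'"
    using gpa_morphism_bracket[OF \<Phi> _ m' b] gpa_morphism_cset[OF \<Phi> b] by auto
qed

theorem mainTheorem12: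
  fixes SE :: "('r::comm_ring_1, 'a::comm_ring_1, 'e::ab_group_add) ipm"
    and SF :: "('r, 'b::comm_ring_1, 'f::ab_group_add) ipm"
    and brE wdE :: "('a, 'e) cochain \<Rightarrow> ('a, 'e) cochain \<Rightarrow> ('a, 'e) cochain"
    and brF wdF :: "('b, 'f) cochain \<Rightarrow> ('b, 'f) cochain \<Rightarrow> ('b, 'f) cochain"
    and m :: "('a, 'e) cochain"
    and \<Phi> :: "('a, 'e) cochain \<Rightarrow> ('b, 'f) cochain"
  assumes "contains_rationals TYPE('r)"
    and "ipmod SE" and "ipmod SF"
    and "bracket_ax SE brE" and "wedge_ax SE brE wdE"
    and "bracket_ax SF brF" and "wedge_ax SF brF wdF"
    and "courant SE m"
    and "gpa_morphism SE SF brE wdE brF wdF \<Phi>"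
  shows "courant SF (\<Phi> m)
    \<and> (\<forall>\<sigma> \<sigma>'. is_symbol SE 3 (chfun m) \<sigma> \<and> is_symbol SF 3 (chfun (\<Phi> m)) \<sigma>' \<longrightarrow>
         courant_morphism SE SF
           (\<lambda>x y. chfun m [x, y]) (\<lambda>x a. \<sigma> [x] a)
           (\<lambda>x y. chfun (\<Phi> m) [x, y]) (\<lambda>x a. \<sigma>' [x] a)
           (\<lambda>a. c0val (\<Phi> (C0 a))) (\<lambda>x. c1val (\<Phi> (C1 x))))
    \<and> induces_cohomology_map SE SF (brE m) (brF (\<Phi> m)) \<Phi>"
proof -
  have m: "m \<in> cset SE 3"
    using \<open>courant SE m\<close> by (simp add: courant_def)
  have "comm_algebra SF" "is_module SF"
    using \<open>ipmod SF\<close> by (simp_all add: ipmod_def)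
  then show ?thesis
    using gpa_morphism_preserves_courant[OF assms(1) _ _ assms(4,6,9,8)]
      gpa_morphism_courant_morphism[OF assms(4-7,9) m]
      gpa_morphism_induces_cohomology_map[OF assms(4,9) m]
    by blast
qed

end
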